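(* Let $N,S,d\ge 1$, $\alpha\in(0,1)$, let $\overline{C}_1,\dots,\overline{C}_S\in\mathbb{R}^{N\times N}$ be symmetric, $\overline{A}_1,\dots,\overline{A}_S\in\mathbb{R}^{N\times d}$, and $h\in\Sigma_N$, with $D_h=\mathrm{diag}(h)$. For $w\in\Sigma_S$ set $\widetilde{C}(w) = \sum_s w_s\overline{C}_s$ and $\widetilde{A}(w)=\sum_s w_s\overline{A}_s$. Define $M_1,M_2\in\mathbb{R}^{S\times S}$ by $(M_1)_{pq} = \langle D_h\overline{C}_p, \overline{C}_q D_h\rangle_F$ and $(M_2)_{pq} = \langle D_h^{1/2}\overline{A}_p, D_h^{1/2}\overline{A}_q\rangle_F$. Then $M_1$, $M_2$ and $M_\alpha := \alpha M_1 + (1-\alpha)M_2$ are positive semi-definite, hence $\|x\|_{M_\alpha}=\sqrt{x^\top M_\alpha x}$ induces a Mahalanobis (pseudo-)distance on $\mathbb{R}^S$, and for all $w^{(1)},w^{(2)}\in\Sigma_S$, $$FGW_{2,\alpha}\big(\widetilde{C}(w^{(1)}),\widetilde{A}(w^{(1)}),\widetilde{C}(w^{(2)}),\widetilde{A}(w^{(2)}),h,h\big)\le \|w^{(1)}-w^{(2)}\|_{M_\alpha}.$$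
   Context: $\Sigma_N = \{h \in \mathbb{R}_+^N : \sum_i h_i = 1\}$; $\mathcal{U}(h,h)=\{T\in\mathbb{R}_+^{N\times N}: T\mathbf{1}_N=h,\ T^\top\mathbf{1}_N=h\}$. For symmetric $C^X,C^Y\in\mathbb{R}^{N\times N}$ and feature matrices $A^X,A^Y\in\mathbb{R}^{N\times d}$ with rows $a^X_i,a^Y_j$, the Fused Gromov–Wasserstein distance with squared Euclidean feature cost is $FGW_{2,\alpha}(C^X,A^X,C^Y,A^Y,h,h) = \big(\min_{T\in\mathcal{U}(h,h)} (1-\alpha)\sum_{i,j}\|a^X_i-a^Y_j\|_2^2T_{ij} + \alpha\sum_{i,j,k,l}(C^X_{ij}-C^Y_{kl})^2T_{ik}T_{jl}\big)^{1/2}$. $\langle A,B\rangle_F=\mathrm{tr}(A^\top B)$. *)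

theory Defs
  imports "HOL-Analysis.Analysis"
begin

text \<open>Matrices are functions on finite index types; N = CARD('n), S = CARD('s), d = CARD('d).\<close>

definition prob_simplex :: "('a::finite \<Rightarrow> real) set" where
  "prob_simplex = {h. (\<forall>i. h i \<ge> 0) \<and> (\<Sum>i\<in>UNIV. h i) = 1}"

definition couplings :: "('n::finite \<Rightarrow> real) \<Rightarrow> ('n \<Rightarrow> 'n \<Rightarrow> real) set" where
  "couplings h = {T. (\<forall>i j. T i j \<ge> 0) \<and> (\<forall>i. (\<Sum>j\<in>UNIV. T i j) = h i)
                     \<and> (\<forall>j. (\<Sum>i\<in>UNIV. T i j) = h j)}"

definition fgw_cost :: "real \<Rightarrow> ('n::finite \<Rightarrow> 'n \<Rightarrow> real) \<Rightarrow> ('n \<Rightarrow> 'd::finite \<Rightarrow> real)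
    \<Rightarrow> ('n \<Rightarrow> 'n \<Rightarrow> real) \<Rightarrow> ('n \<Rightarrow> 'd \<Rightarrow> real) \<Rightarrow> ('n \<Rightarrow> 'n \<Rightarrow> real) \<Rightarrow> real" where
  "fgw_cost \<alpha> CX AX CY AY T =
     (1 - \<alpha>) * (\<Sum>i\<in>UNIV. \<Sum>j\<in>UNIV. (\<Sum>k\<in>UNIV. (AX i k - AY j k)\<^sup>2) * T i j)
     + \<alpha> * (\<Sum>i\<in>UNIV. \<Sum>j\<in>UNIV. \<Sum>k\<in>UNIV. \<Sum>l\<in>UNIV. (CX i j - CY k l)\<^sup>2 * T i k * T j l)"

text \<open>FGW_{2,alpha}(C^X,A^X,C^Y,A^Y,h,h): square root of the minimal cost over U(h,h)
  (the minimum is attained, so it equals the infimum).\<close>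
definition FGW2 :: "real \<Rightarrow> ('n::finite \<Rightarrow> 'n \<Rightarrow> real) \<Rightarrow> ('n \<Rightarrow> 'd::finite \<Rightarrow> real)
    \<Rightarrow> ('n \<Rightarrow> 'n \<Rightarrow> real) \<Rightarrow> ('n \<Rightarrow> 'd \<Rightarrow> real) \<Rightarrow> ('n \<Rightarrow> real) \<Rightarrow> real" where
  "FGW2 \<alpha> CX AX CY AY h = sqrt (Inf (fgw_cost \<alpha> CX AX CY AY ` couplings h))"

definition frob :: "('a::finite \<Rightarrow> 'b::finite \<Rightarrow> real) \<Rightarrow> ('a \<Rightarrow> 'b \<Rightarrow> real) \<Rightarrow> real" where
  "frob A B = (\<Sum>i\<in>UNIV. \<Sum>j\<in>UNIV. A i j * B i j)"

definition quad_form :: "('s::finite \<Rightarrow> 's \<Rightarrow> real) \<Rightarrow> ('s \<Rightarrow> real) \<Rightarrow> real" where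
  "quad_form M x = (\<Sum>p\<in>UNIV. \<Sum>q\<in>UNIV. x p * M p q * x q)"

definition psd :: "('s::finite \<Rightarrow> 's \<Rightarrow> real) \<Rightarrow> bool" where
  "psd M \<longleftrightarrow> (\<forall>x. quad_form M x \<ge> 0)"

definition mahal_norm :: "('s::finite \<Rightarrow> 's \<Rightarrow> real) \<Rightarrow> ('s \<Rightarrow> real) \<Rightarrow> real" where
  "mahal_norm M x = sqrt (quad_form M x)"

text \<open>D_h = diag(h); matrix products with diagonal matrices written entrywise.\<close>
definition M1 :: "('n::finite \<Rightarrow> real) \<Rightarrow> ('s::finite \<Rightarrow> 'n \<Rightarrow> 'n \<Rightarrow> real) \<Rightarrow> 's \<Rightarrow> 's \<Rightarrow> real" where
  "M1 h C p q = frob (\<lambda>i j. h i * C p i j) (\<lambda>i j. C q i j * h j)"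

definition M2 :: "('n::finite \<Rightarrow> real) \<Rightarrow> ('s::finite \<Rightarrow> 'n \<Rightarrow> 'd::finite \<Rightarrow> real) \<Rightarrow> 's \<Rightarrow> 's \<Rightarrow> real" where
  "M2 h A p q = frob (\<lambda>i k. sqrt (h i) * A p i k) (\<lambda>i k. sqrt (h i) * A q i k)"

definition Malpha :: "real \<Rightarrow> ('n::finite \<Rightarrow> real) \<Rightarrow> ('s::finite \<Rightarrow> 'n \<Rightarrow> 'n \<Rightarrow> real)
    \<Rightarrow> ('s \<Rightarrow> 'n \<Rightarrow> 'd::finite \<Rightarrow> real) \<Rightarrow> 's \<Rightarrow> 's \<Rightarrow> real" where
  "Malpha \<alpha> h C A p q = \<alpha> * M1 h C p q + (1 - \<alpha>) * M2 h A p q"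

definition Ctil :: "('s::finite \<Rightarrow> 'n \<Rightarrow> 'n \<Rightarrow> real) \<Rightarrow> ('s \<Rightarrow> real) \<Rightarrow> 'n \<Rightarrow> 'n \<Rightarrow> real" where
  "Ctil C w = (\<lambda>i j. \<Sum>s\<in>UNIV. w s * C s i j)"

definition Atil :: "('s::finite \<Rightarrow> 'n \<Rightarrow> 'd \<Rightarrow> real) \<Rightarrow> ('s \<Rightarrow> real) \<Rightarrow> 'n \<Rightarrow> 'd \<Rightarrow> real" where
  "Atil A w = (\<lambda>i k. \<Sum>s\<in>UNIV. w s * A s i k)"

end

(*
  M1 and M2 are Gram matrices, so x^T M1 x and x^T M2 x are the weighted sums of squares
  ||D_h^(1/2) C(x) D_h^(1/2)||_F^2 and ||D_h^(1/2) A(x)||_F^2 with C(x) = sum_s x_s C_s,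
  A(x) = sum_s x_s A_s; hence M1, M2 and their convex combination are positive semi-definite.
  The mixtures are linear in the weights, and the diagonal coupling D_h, which matches every
  node with itself, has FGW cost alpha x^T M1 x + (1 - alpha) x^T M2 x at x = w1 - w2.
  FGW is at most the square root of the cost of any coupling.
*)
theory Submission
  imports Defs
begin

lemma quad_form_gram:
  fixes g :: "'i::finite \<Rightarrow> 'j::finite \<Rightarrow> real" and f :: "'s::finite \<Rightarrow> 'i \<Rightarrow> 'j \<Rightarrow> real"
  shows "quad_form (\<lambda>p q. \<Sum>i\<in>UNIV. \<Sum>j\<in>UNIV. g i j * f p i j * f q i j) x
       = (\<Sum>i\<in>UNIV. \<Sum>j\<in>UNIV. g i j * (\<Sum>p\<in>UNIV. x p * f p i j)\<^sup>2)"
proof -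
  have "quad_form (\<lambda>p q. \<Sum>i\<in>UNIV. \<Sum>j\<in>UNIV. g i j * f p i j * f q i j) x
      = (\<Sum>p\<in>UNIV. \<Sum>q\<in>UNIV. \<Sum>i\<in>UNIV. \<Sum>j\<in>UNIV. g i j * (x p * f p i j) * (x q * f q i j))"
    unfolding quad_form_def by (simp add: sum_distrib_left sum_distrib_right mult_ac)
  also have "\<dots> = (\<Sum>i\<in>UNIV. \<Sum>j\<in>UNIV. \<Sum>p\<in>UNIV. \<Sum>q\<in>UNIV. g i j * (x p * f p i j) * (x q * f q i j))"
    by (subst (2) sum.swap, subst sum.swap, subst (2) sum.swap, subst (4) sum.swap, rule refl)
  also have "\<dots> = (\<Sum>i\<in>UNIV. \<Sum>j\<in>UNIV. g i j * (\<Sum>p\<in>UNIV. x p * f p i j)\<^sup>2)"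
    by (simp add: power2_eq_square sum_product sum_distrib_left mult_ac)
  finally show ?thesis .
qed

lemma quad_form_lincomb:
  "quad_form (\<lambda>p q. a * M p q + b * M' p q) x = a * quad_form M x + b * quad_form M' x"
  unfolding quad_form_def by (simp add: algebra_simps sum.distrib sum_distrib_left)

lemma psd_lincomb:
  assumes "0 \<le> a" "0 \<le> b" "psd M" "psd M'"
  shows "psd (\<lambda>p q. a * M p q + b * M' p q)"
  using assms unfolding psd_def quad_form_lincomb by simp

lemma Ctil_diff: "Ctil C w1 i j - Ctil C w2 i j = Ctil C (w1 - w2) i j"
  unfolding Ctil_def by (simp add: sum_subtractf[symmetric] left_diff_distrib)

lemma Atil_diff: "Atil A w1 i k - Atil A w2 i k = Atil A (w1 - w2) i k"
  unfolding Atil_def by (simp add: sum_subtractf[symmetric] left_diff_distrib)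

lemma quad_form_M1: "quad_form (M1 h C) x = (\<Sum>i\<in>UNIV. \<Sum>j\<in>UNIV. h i * h j * (Ctil C x i j)\<^sup>2)"
  unfolding M1_def frob_def Ctil_def quad_form_gram[symmetric] by (simp add: mult_ac)

lemma quad_form_M2:
  assumes "\<forall>i. 0 \<le> h i"
  shows "quad_form (M2 h A) x = (\<Sum>i\<in>UNIV. \<Sum>k\<in>UNIV. h i * (Atil A x i k)\<^sup>2)"
proof -
  have sqrt_h: "sqrt (h i) * a * (sqrt (h i) * b) = h i * a * b" for i a b
  proof -
    have "sqrt (h i) * a * (sqrt (h i) * b) = (sqrt (h i) * sqrt (h i)) * a * b"
      by (simp only: mult_ac)
    also have "\<dots> = h i * a * b"
      using assms by simp
    finally show ?thesis .
  qed
  show ?thesis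
    unfolding M2_def frob_def Atil_def quad_form_gram[symmetric] sqrt_h ..
qed

lemma quad_form_Malpha:
  "quad_form (Malpha \<alpha> h C A) x = \<alpha> * quad_form (M1 h C) x + (1 - \<alpha>) * quad_form (M2 h A) x"
  unfolding Malpha_def[abs_def] by (rule quad_form_lincomb)

lemma psd_M1:
  assumes "\<forall>i. 0 \<le> h i"
  shows "psd (M1 h C)"
  unfolding psd_def quad_form_M1 using assms by (auto intro!: sum_nonneg)

lemma psd_M2:
  assumes "\<forall>i. 0 \<le> h i"
  shows "psd (M2 h A)"
  unfolding psd_def quad_form_M2[OF assms] using assms by (auto intro!: sum_nonneg)

lemma psd_Malpha:
  assumes "0 \<le> \<alpha>" "\<alpha> \<le> 1" "\<forall>i. 0 \<le> h i"
  shows "psd (Malpha \<alpha> h C A)"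
  unfolding Malpha_def[abs_def] using assms by (intro psd_lincomb psd_M1 psd_M2) auto

definition diag_coupling :: "('n \<Rightarrow> real) \<Rightarrow> 'n \<Rightarrow> 'n \<Rightarrow> real" where
  "diag_coupling h = (\<lambda>i j. if i = j then h i else 0)"

lemma diag_coupling_in_couplings:
  assumes "\<forall>i. 0 \<le> h i"
  shows "diag_coupling h \<in> couplings h"
  using assms unfolding diag_coupling_def couplings_def by auto

lemma fgw_cost_diag_coupling:
  "fgw_cost \<alpha> CX AX CY AY (diag_coupling h) =
     (1 - \<alpha>) * (\<Sum>i\<in>UNIV. h i * (\<Sum>k\<in>UNIV. (AX i k - AY i k)\<^sup>2))
     + \<alpha> * (\<Sum>i\<in>UNIV. \<Sum>j\<in>UNIV. h i * h j * (CX i j - CY i j)\<^sup>2)"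
proof -
  have mult_if: "x * (if c then y else 0) = (if c then x * y else 0)" for x y :: real and c
    by simp
  have if_mult: "(if c then y else 0) * x = (if c then y * x else 0)" for x y :: real and c
    by simp
  have sum_if: "(\<Sum>l\<in>L. if c then f l else 0) = (if c then \<Sum>l\<in>L. f l else 0)" for L c and f :: "_ \<Rightarrow> real"
    by simp
  show ?thesis
    unfolding fgw_cost_def diag_coupling_def by (simp add: mult_if if_mult sum_if mult_ac)
qed

lemma fgw_cost_nonneg:
  assumes "0 \<le> \<alpha>" "\<alpha> \<le> 1" "T \<in> couplings h"
  shows "0 \<le> fgw_cost \<alpha> CX AX CY AY T"
  using assms unfolding fgw_cost_def couplings_def
  by (intro add_nonneg_nonneg mult_nonneg_nonneg sum_nonneg) auto

lemma FGW2_le_sqrt_fgw_cost: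
  assumes "0 \<le> \<alpha>" "\<alpha> \<le> 1" "T \<in> couplings h"
  shows "FGW2 \<alpha> CX AX CY AY h \<le> sqrt (fgw_cost \<alpha> CX AX CY AY T)"
proof -
  have "bdd_below (fgw_cost \<alpha> CX AX CY AY ` couplings h)"
    using fgw_cost_nonneg[OF assms(1,2)] by (intro bdd_belowI[where m = 0]) blast
  then have "Inf (fgw_cost \<alpha> CX AX CY AY ` couplings h) \<le> fgw_cost \<alpha> CX AX CY AY T"
    using assms(3) by (auto intro: cInf_lower)
  then show ?thesis
    unfolding FGW2_def by simp
qed

lemma fgw_cost_diag_coupling_mixtures:
  assumes "\<forall>i. 0 \<le> h i"
  shows "fgw_cost \<alpha> (Ctil C w1) (Atil A w1) (Ctil C w2) (Atil A w2) (diag_coupling h)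
           = quad_form (Malpha \<alpha> h C A) (w1 - w2)"
  unfolding fgw_cost_diag_coupling quad_form_Malpha quad_form_M1 quad_form_M2[OF assms]
    Ctil_diff Atil_diff
  by (simp add: sum_distrib_left)

lemma FGW2_mixtures_le_mahal_norm:
  assumes "0 \<le> \<alpha>" "\<alpha> \<le> 1" "\<forall>i. 0 \<le> h i"
  shows "FGW2 \<alpha> (Ctil C w1) (Atil A w1) (Ctil C w2) (Atil A w2) h
           \<le> mahal_norm (Malpha \<alpha> h C A) (w1 - w2)"
proof -
  have "FGW2 \<alpha> (Ctil C w1) (Atil A w1) (Ctil C w2) (Atil A w2) h
      \<le> sqrt (fgw_cost \<alpha> (Ctil C w1) (Atil A w1) (Ctil C w2) (Atil A w2) (diag_coupling h))"
    using assms by (intro FGW2_le_sqrt_fgw_cost diag_coupling_in_couplings)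
  then show ?thesis
    unfolding fgw_cost_diag_coupling_mixtures[OF assms(3)] mahal_norm_def .
qed

theorem proposition4:
  fixes \<alpha> :: real
    and C :: "'s::finite \<Rightarrow> 'n::finite \<Rightarrow> 'n \<Rightarrow> real"
    and A :: "'s \<Rightarrow> 'n \<Rightarrow> 'd::finite \<Rightarrow> real"
    and h :: "'n \<Rightarrow> real"
  assumes "0 < \<alpha>" and "\<alpha> < 1"
    and "\<forall>s i j. C s i j = C s j i"
    and "h \<in> prob_simplex"
  shows "psd (M1 h C) \<and> psd (M2 h A) \<and> psd (Malpha \<alpha> h C A) \<and>
         (\<forall>w1 \<in> prob_simplex. \<forall>w2 \<in> prob_simplex.
            FGW2 \<alpha> (Ctil C w1) (Atil A w1) (Ctil C w2) (Atil A w2) h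
              \<le> mahal_norm (Malpha \<alpha> h C A) (w1 - w2))"
proof -
  have h_nonneg: "\<forall>i. 0 \<le> h i"
    using assms(4) unfolding prob_simplex_def by simp
  have "0 \<le> \<alpha>" "\<alpha> \<le> 1"
    using assms(1,2) by simp_all
  with h_nonneg show ?thesis
    by (simp add: psd_M1 psd_M2 psd_Malpha FGW2_mixtures_le_mahal_norm)
qed

end
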